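(* Let $(a,b,c)^T\in\mathbb{Z}^3$ with $\gcd(a,b,c)=1$, and let $K=\{(x,y,z)^T\in\mathbb{R}^3 : ax+by+cz=0\}$. Then there exists an orthogonal lattice basis of $K$, i.e. two mutually orthogonal vectors $u,v\in\mathbb{Z}^3\cap K$ forming a basis of $K$.
   Context: A lattice basis of $K$ means a basis of the real vector space $K$ consisting of vectors of $\mathbb{Z}^3$; orthogonality is with respect to the standard inner product on $\mathbb{R}^3$. *)

theory Defs
  imports "HOL-Analysis.Analysis"
begin

definition plane_K :: "int \<Rightarrow> int \<Rightarrow> int \<Rightarrow> (real^3) set" where
  "plane_K a b c = {x. of_int a * x$1 + of_int b * x$2 + of_int c * x$3 = 0}"

definition int_vec :: "real^3 \<Rightarrow> bool" where
  "int_vec x \<longleftrightarrow> (\<forall>i. x $ i \<in> \<int>)"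

end

theory Submission
  imports Defs
begin

text \<open>With n = (a, b, c), the plane K is the orthogonal complement of n. Take any nonzero
  integer vector u orthogonal to n, e.g. (-b, a, 0); then u and the cross product n \<times> u are
  integer vectors of K, orthogonal to each other and nonzero, hence a basis of the
  two-dimensional space K. The condition gcd(a, b, c) = 1 only serves to make n nonzero.\<close>

unbundle cross3_syntax

definition normal_vec :: "int \<Rightarrow> int \<Rightarrow> int \<Rightarrow> real^3" where
  "normal_vec a b c = vector [of_int a, of_int b, of_int c]"

lemma plane_K_eq_hyperplane: "plane_K a b c = {x. normal_vec a b c \<bullet> x = 0}"
  by (simp add: plane_K_def normal_vec_def inner_vec_def sum_3)

lemma normal_vec_eq_0_iff: "normal_vec a b c = 0 \<longleftrightarrow> a = 0 \<and> b = 0 \<and> c = 0"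
  by (simp add: normal_vec_def vec_eq_iff forall_3)

lemma int_vec_normal_vec: "int_vec (normal_vec a b c)"
  by (simp add: int_vec_def normal_vec_def forall_3)

lemma int_vec_cross: "int_vec x \<Longrightarrow> int_vec y \<Longrightarrow> int_vec (x \<times> y)"
  by (simp add: int_vec_def forall_3 cross_components)

lemma int_vec_orthogonal_nonzero_ex:
  assumes "int_vec n"
  obtains u where "int_vec u" "u \<noteq> 0" "n \<bullet> u = 0"
proof (cases "n$1 = 0 \<and> n$2 = 0")
  case True
  then show ?thesis
    by (intro that[of "axis 1 1"]) (auto simp: int_vec_def axis_def inner_vec_def sum_3 vec_eq_iff)
next
  case False
  then show ?thesis
    using assms
    by (intro that[of "vector [- n$2, n$1, 0]"])
       (auto simp: int_vec_def forall_3 vec_eq_iff inner_vec_def sum_3)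
qed

lemma orthogonal_basis_of_hyperplane_cross:
  fixes n u :: "real^3"
  assumes "n \<noteq> 0" "u \<noteq> 0" "n \<bullet> u = 0"
  shows "independent {u, n \<times> u}" "span {u, n \<times> u} = {x. n \<bullet> x = 0}"
proof -
  have "n \<times> u \<noteq> 0"
    using norm_cross_dot[of n u] assms by auto
  moreover have "u \<bullet> (n \<times> u) = 0"
    by (simp add: dot_cross_self)
  ultimately show indep: "independent {u, n \<times> u}"
    using assms(2)
    by (intro pairwise_orthogonal_independent)
       (auto simp: pairwise_def orthogonal_def inner_commute)
  have in_plane: "{u, n \<times> u} \<subseteq> {x. n \<bullet> x = 0}"
    using assms(3) by (simp add: dot_cross_self)
  have "u \<noteq> n \<times> u"
    using \<open>u \<bullet> (n \<times> u) = 0\<close> assms(2) by auto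
  then have "dim {x. n \<bullet> x = 0} \<le> card {u, n \<times> u}"
    using dim_hyperplane[OF assms(1)] by simp
  then have "{x. n \<bullet> x = 0} \<subseteq> span {u, n \<times> u}"
    using card_ge_dim_independent[OF in_plane indep] by blast
  moreover have "span {u, n \<times> u} \<subseteq> {x. n \<bullet> x = 0}"
    using in_plane by (simp add: span_minimal subspace_hyperplane)
  ultimately show "span {u, n \<times> u} = {x. n \<bullet> x = 0}"
    by blast
qed

theorem lemma2:
  fixes a b c :: int
  assumes "gcd a (gcd b c) = 1"
  shows "\<exists>u v :: real^3. int_vec u \<and> int_vec v \<and> u \<in> plane_K a b c \<and> v \<in> plane_K a b c
           \<and> u \<bullet> v = 0 \<and> u \<noteq> v \<and> independent {u, v} \<and> span {u, v} = plane_K a b c"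
proof -
  let ?n = "normal_vec a b c"
  have "?n \<noteq> 0"
    using assms by (auto simp: normal_vec_eq_0_iff)
  obtain u where u: "int_vec u" "u \<noteq> 0" "?n \<bullet> u = 0"
    using int_vec_orthogonal_nonzero_ex[OF int_vec_normal_vec] by blast
  have "u \<bullet> (?n \<times> u) = 0"
    by (simp add: dot_cross_self)
  then have "u \<noteq> ?n \<times> u"
    using u(2) by auto
  then show ?thesis
    using u \<open>u \<bullet> (?n \<times> u) = 0\<close> orthogonal_basis_of_hyperplane_cross[OF \<open>?n \<noteq> 0\<close> u(2,3)]
      int_vec_cross[OF int_vec_normal_vec u(1)]
    by (intro exI[of _ u] exI[of _ "?n \<times> u"])
       (auto simp: plane_K_eq_hyperplane dot_cross_self)
qed

end
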